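(* Let $\mathcal{T} = \{T_1, \ldots, T_t\}$ be a set of unrooted binary phylogenetic trees on a common leaf set $X$, let $\mathcal{Q}$ be the set of quartets that are incompatible quartets of $T_1$ and $T_i$ for some $2 \le i \le t$, and let $\tilde x$ be an optimal solution of the linear program $$\text{minimize } \sum_{e \in E(T_1)} x_e \quad \text{s.t. } \sum_{e \in L(Q)} x_e \ge 1 \ \ \forall Q \in \mathcal{Q}, \qquad x_e \ge 0\ \ \forall e \in E(T_1).$$ Let $E \subseteq E(T_1)$ be the edge set produced by the following rounding procedure. Root $T_1$ at an arbitrary leaf $r$; for each edge $e$ let $u_e$ be its endpoint on the path from $r$ to the other endpoint $v_e$. Start with $E = \emptyset$. For the current $E$ and each edge $e$, let $D(e)$ be the set of edges $f$ such that $v_e$ lies on the path from $r$ to $v_f$ and the path from $v_e$ to $v_f$ contains no edge of $E$ (so $e \in D(e)$), and let $w(e) = \sum_{f \in D(e)} \tilde x_f$. While there exists an edge $e$ with $w(e) \ge 1/4$ and $w(f) < 1/4$ for all $f \in D(e) \setminus \{e\}$, add one such edge $e$ to $E$ (recomputing $D$ and $w$ afterwards); stop when every edge $e \in E(T_1) \setminus E$ has $w(e) < 1/4$. Then the final set satisfies $$|E| \le 4 \sum_{e \in E(T_1)} \tilde x_e.$$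
   Context: A (binary) phylogenetic tree on a finite set $X$ is an unrooted tree whose internal vertices have degree 3 and whose leaves are bijectively labelled by $X$. Two phylogenetic trees on $X$ are isomorphic ($\cong$) if there is a graph isomorphism between them fixing every leaf label. For $Y \subseteq X$, $T[Y]$ is the minimal subtree of $T$ connecting the leaves in $Y$, and $T|_Y$ is obtained from $T[Y]$ by suppressing all degree-2 vertices. A quartet is a 4-element subset of $X$; for $Q=\{a,b,c,d\}$, $ab|cd$ is the tree on $Q$ where $a,b$ share a neighbour $u$, $c,d$ share a neighbour $v$, and $u,v$ are adjacent. If $T_1|_Q \cong ab|cd$, $L(Q)$ is the set of edges of $T_1[\{a,b\}] \cup T_1[\{c,d\}]$. $Q$ is an incompatible quartet of $T_1,T_i$ if $T_1|_Q \not\cong T_i|_Q$. *)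

theory Defs
  imports Complex_Main
begin

record ('x, 'v) ptree =
  verts :: "'v set"
  edges :: "'v set set"
  lab   :: "'x \<Rightarrow> 'v"

definition is_path :: "'v set set \<Rightarrow> 'v list \<Rightarrow> 'v \<Rightarrow> 'v \<Rightarrow> bool" where
  "is_path E p u v \<longleftrightarrow> p \<noteq> [] \<and> hd p = u \<and> last p = v \<and> distinct p \<and>
     (\<forall>i. Suc i < length p \<longrightarrow> {p ! i, p ! Suc i} \<in> E)"

definition acyclic_graph :: "'v set set \<Rightarrow> bool" where
  "acyclic_graph E \<longleftrightarrow> \<not> (\<exists>p. 3 \<le> length p \<and> distinct p \<and>
     (\<forall>i. Suc i < length p \<longrightarrow> {p ! i, p ! Suc i} \<in> E) \<and> {last p, hd p} \<in> E)"

definition is_tree :: "'v set \<Rightarrow> 'v set set \<Rightarrow> bool" where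
  "is_tree V E \<longleftrightarrow> finite V \<and> V \<noteq> {} \<and>
     (\<forall>e\<in>E. \<exists>u v. e = {u, v} \<and> u \<noteq> v \<and> u \<in> V \<and> v \<in> V) \<and>
     (\<forall>u\<in>V. \<forall>v\<in>V. \<exists>p. is_path E p u v) \<and> acyclic_graph E"

definition deg :: "'v set set \<Rightarrow> 'v \<Rightarrow> nat" where
  "deg E v = card {e \<in> E. v \<in> e}"

text \<open>The (unique, in a tree) path between two vertices.\<close>
definition path_list :: "'v set set \<Rightarrow> 'v \<Rightarrow> 'v \<Rightarrow> 'v list" where
  "path_list E u v = (THE p. is_path E p u v)"

definition path_verts :: "'v set set \<Rightarrow> 'v \<Rightarrow> 'v \<Rightarrow> 'v set" where
  "path_verts E u v = set (path_list E u v)"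

definition path_edges :: "'v set set \<Rightarrow> 'v \<Rightarrow> 'v \<Rightarrow> 'v set set" where
  "path_edges E u v =
     {{path_list E u v ! i, path_list E u v ! Suc i} | i. Suc i < length (path_list E u v)}"

definition phylo_tree :: "'x set \<Rightarrow> ('x, 'v) ptree \<Rightarrow> bool" where
  "phylo_tree X T \<longleftrightarrow> is_tree (verts T) (edges T) \<and> inj_on (lab T) X \<and>
     lab T ` X \<subseteq> verts T \<and>
     (\<forall>x\<in>X. deg (edges T) (lab T x) \<le> 1) \<and>
     (\<forall>v \<in> verts T - lab T ` X. deg (edges T) v = 3)"

definition ptree_iso :: "'x set \<Rightarrow> ('x, 'v) ptree \<Rightarrow> ('x, 'w) ptree \<Rightarrow> bool" where
  "ptree_iso X T S \<longleftrightarrow> (\<exists>f. bij_betw f (verts T) (verts S) \<and>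
     (\<forall>u\<in>verts T. \<forall>v\<in>verts T. {u, v} \<in> edges T \<longleftrightarrow> {f u, f v} \<in> edges S) \<and>
     (\<forall>x\<in>X. f (lab T x) = lab S x))"

definition span_verts :: "('x, 'v) ptree \<Rightarrow> 'x set \<Rightarrow> 'v set" where
  "span_verts T Y = (\<Union>a\<in>Y. \<Union>b\<in>Y. path_verts (edges T) (lab T a) (lab T b))"

definition span_edges :: "('x, 'v) ptree \<Rightarrow> 'x set \<Rightarrow> 'v set set" where
  "span_edges T Y = (\<Union>a\<in>Y. \<Union>b\<in>Y. path_edges (edges T) (lab T a) (lab T b))"

text \<open>T|_Y: T[Y] with all degree-2 vertices suppressed.\<close>
definition restr :: "('x, 'v) ptree \<Rightarrow> 'x set \<Rightarrow> ('x, 'v) ptree" where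
  "restr T Y =
    (let W = {v \<in> span_verts T Y. deg (span_edges T Y) v \<noteq> 2} in
     \<lparr> verts = W,
       edges = {{u, w} | u w. u \<in> W \<and> w \<in> W \<and> u \<noteq> w \<and>
                  path_verts (edges T) u w \<inter> W = {u, w}},
       lab = lab T \<rparr>)"

definition qtree :: "'x \<Rightarrow> 'x \<Rightarrow> 'x \<Rightarrow> 'x \<Rightarrow> ('x, 'x + bool) ptree" where
  "qtree a b c d =
    \<lparr> verts = {Inl a, Inl b, Inl c, Inl d, Inr True, Inr False},
      edges = {{Inl a, Inr True}, {Inl b, Inr True}, {Inl c, Inr False},
               {Inl d, Inr False}, {Inr True, Inr False}},
      lab = Inl \<rparr>"

definition quartets :: "'x set \<Rightarrow> 'x set set" where
  "quartets X = {Q. Q \<subseteq> X \<and> card Q = 4}"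

definition Lq :: "('x, 'v) ptree \<Rightarrow> 'x set \<Rightarrow> 'v set set" where
  "Lq T Q = \<Union>{path_edges (edges T) (lab T a) (lab T b) \<union> path_edges (edges T) (lab T c) (lab T d)
                | a b c d. Q = {a, b, c, d} \<and> ptree_iso Q (restr T Q) (qtree a b c d)}"

definition incompatible_quartet :: "('x, 'v) ptree \<Rightarrow> ('x, 'v) ptree \<Rightarrow> 'x set \<Rightarrow> bool" where
  "incompatible_quartet T1 T2 Q \<longleftrightarrow> \<not> ptree_iso Q (restr T1 Q) (restr T2 Q)"

definition lp_feasible :: "('x, 'v) ptree \<Rightarrow> 'x set set \<Rightarrow> ('v set \<Rightarrow> real) \<Rightarrow> bool" where
  "lp_feasible T Qs x \<longleftrightarrow> (\<forall>e\<in>edges T. x e \<ge> 0) \<and> (\<forall>Q\<in>Qs. (\<Sum>e\<in>Lq T Q. x e) \<ge> 1)"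

definition lp_optimal :: "('x, 'v) ptree \<Rightarrow> 'x set set \<Rightarrow> ('v set \<Rightarrow> real) \<Rightarrow> bool" where
  "lp_optimal T Qs x \<longleftrightarrow> lp_feasible T Qs x \<and>
     (\<forall>y. lp_feasible T Qs y \<longrightarrow> (\<Sum>e\<in>edges T. x e) \<le> (\<Sum>e\<in>edges T. y e))"

definition lower_end :: "('x, 'v) ptree \<Rightarrow> 'v \<Rightarrow> 'v set \<Rightarrow> 'v" where
  "lower_end T r e = (THE v. v \<in> e \<and> (\<exists>u\<in>e. u \<noteq> v \<and> u \<in> path_verts (edges T) r v))"

definition Dset :: "('x, 'v) ptree \<Rightarrow> 'v \<Rightarrow> 'v set set \<Rightarrow> 'v set \<Rightarrow> 'v set set" where
  "Dset T r E e = {f \<in> edges T.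
      lower_end T r e \<in> path_verts (edges T) r (lower_end T r f) \<and>
      path_edges (edges T) (lower_end T r e) (lower_end T r f) \<inter> E = {}}"

definition wt :: "('x, 'v) ptree \<Rightarrow> 'v \<Rightarrow> ('v set \<Rightarrow> real) \<Rightarrow> 'v set set \<Rightarrow> 'v set \<Rightarrow> real" where
  "wt T r x E e = (\<Sum>f\<in>Dset T r E e. x f)"

text \<open>Sets of edges reachable by running the (nondeterministic) while loop.\<close>
inductive rounding_reach :: "('x, 'v) ptree \<Rightarrow> 'v \<Rightarrow> ('v set \<Rightarrow> real) \<Rightarrow> 'v set set \<Rightarrow> bool"
  for T r x where
  start: "rounding_reach T r x {}"
| step: "\<lbrakk> rounding_reach T r x E; e \<in> edges T; e \<notin> E; wt T r x E e \<ge> 1/4;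
           \<forall>f \<in> Dset T r E e - {e}. wt T r x E f < 1/4 \<rbrakk>
         \<Longrightarrow> rounding_reach T r x (insert e E)"

definition rounding_final :: "('x, 'v) ptree \<Rightarrow> 'v \<Rightarrow> ('v set \<Rightarrow> real) \<Rightarrow> 'v set set \<Rightarrow> bool" where
  "rounding_final T r x E \<longleftrightarrow> rounding_reach T r x E \<and>
     (\<forall>e \<in> edges T - E. wt T r x E e < 1/4)"

end

theory Submission
  imports Defs "HOL-Library.Disjoint_Sets"
begin

text \<open>Charge every edge e added to E to the set D(e) current at that moment, whose weight is at
  least 1/4. These charge sets are pairwise disjoint. Suppose f lies in the set charged to e and
  in the current D(e') of an edge e' that is still heavy. Then v_e and v_e' both lie on the path
  from the root to v_f. If v_e lies above v_e', then e' was in D(e) when e was chosen, so it was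
  light then, and weights only decrease as E grows; otherwise the path from v_e' to v_f passes
  through e, which is in E. Hence |E|/4 is at most the sum of x.\<close>

lemma in_set_take_Suc_iff: "j < length xs \<Longrightarrow> x \<in> set (take (Suc j) xs) \<longleftrightarrow> (\<exists>i\<le>j. xs ! i = x)"
  by (auto simp: in_set_conv_nth less_Suc_eq_le)

fun walk_edges :: "'v list \<Rightarrow> 'v set set" where
  "walk_edges (a # b # xs) = insert {a, b} (walk_edges (b # xs))"
| "walk_edges _ = {}"

lemma walk_edges_conv_nth: "walk_edges p = (\<lambda>i. {p ! i, p ! Suc i}) ` {..<length p - 1}"
  by (induction p rule: walk_edges.induct) (simp_all add: lessThan_Suc_eq_insert_0 image_image)

lemma walk_edges_append:
  "walk_edges (xs @ ys) =
     walk_edges xs \<union> walk_edges ys \<union> (if xs = [] \<or> ys = [] then {} else {{last xs, hd ys}})"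
  by (induction xs rule: walk_edges.induct) (auto simp: neq_Nil_conv)

lemma walk_edges_rev: "walk_edges (rev xs) = walk_edges xs"
proof (induction xs)
  case (Cons a xs)
  have "walk_edges (rev (a # xs)) = walk_edges xs \<union> (if xs = [] then {} else {{hd xs, a}})"
    using Cons.IH by (simp add: walk_edges_append last_rev)
  then show ?case by (cases xs) (auto simp: insert_commute)
qed simp

lemma walk_edges_take: "walk_edges (take n xs) \<subseteq> walk_edges xs"
  using walk_edges_append[of "take n xs" "drop n xs"] by auto

lemma walk_edges_drop: "walk_edges (drop n xs) \<subseteq> walk_edges xs"
  using walk_edges_append[of "take n xs" "drop n xs"] by auto

lemma walk_edges_subset_iff:
  "walk_edges p \<subseteq> E \<longleftrightarrow> (\<forall>i. Suc i < length p \<longrightarrow> {p ! i, p ! Suc i} \<in> E)"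
  unfolding walk_edges_conv_nth by auto

lemma is_path_iff_walk_edges:
  "is_path E p u v \<longleftrightarrow> p \<noteq> [] \<and> hd p = u \<and> last p = v \<and> distinct p \<and> walk_edges p \<subseteq> E"
  unfolding is_path_def walk_edges_subset_iff ..

lemma acyclic_graph_iff_walk_edges:
  "acyclic_graph E \<longleftrightarrow>
     \<not> (\<exists>c. 3 \<le> length c \<and> distinct c \<and> walk_edges c \<subseteq> E \<and> {last c, hd c} \<in> E)"
  unfolding acyclic_graph_def walk_edges_subset_iff ..

lemma path_edges_eq_walk_edges: "path_edges E u v = walk_edges (path_list E u v)"
  unfolding path_edges_def walk_edges_conv_nth by auto

lemma is_path_Cons:
  assumes "p \<noteq> []"
  shows "is_path E (u # p) u' v \<longleftrightarrow>
           u' = u \<and> u \<notin> set p \<and> {u, hd p} \<in> E \<and> is_path E p (hd p) v"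
  using assms by (cases p) (auto simp: is_path_iff_walk_edges)

lemma is_path_loop: "is_path E (u # p) u u \<Longrightarrow> p = []"
  unfolding is_path_def by (metis distinct.simps(2) last_ConsR last_in_set)

lemma is_path_snoc:
  assumes "is_path E p u v" "w \<notin> set p" "{v, w} \<in> E"
  shows "is_path E (p @ [w]) u w"
  using assms by (auto simp: is_path_iff_walk_edges walk_edges_append)

lemma is_path_take:
  assumes "is_path E p u v" "i < length p"
  shows "is_path E (take (Suc i) p) u (p ! i)"
proof -
  have "last (take (Suc i) p) = p ! i" using assms(2) by (simp add: take_Suc_conv_app_nth)
  then show ?thesis
    using assms walk_edges_take[of "Suc i" p] by (auto simp: is_path_iff_walk_edges hd_take)
qed

lemma is_path_drop:
  assumes "is_path E p u v" "i < length p"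
  shows "is_path E (drop i p) (p ! i) v"
  using assms walk_edges_drop[of i p]
  by (auto simp: is_path_iff_walk_edges hd_drop_conv_nth)

text \<open>The cycle follows p up to its first vertex y on q and returns to u along q.\<close>
lemma diverging_paths_not_acyclic:
  assumes "distinct (u # p)" "distinct (u # q)" "p \<noteq> []" "q \<noteq> []" "hd p \<noteq> hd q"
    and "last p = last q" "walk_edges (u # p) \<subseteq> E" "walk_edges (u # q) \<subseteq> E"
  shows "\<not> acyclic_graph E"
proof -
  have "\<exists>y\<in>set p. y \<in> set q" using assms(3,4,6) by (metis last_in_set)
  then obtain xs y ys
    where p: "p = xs @ y # ys" and "y \<in> set q" and xs: "\<forall>z\<in>set xs. z \<notin> set q"
    using split_list_first_prop[of p "\<lambda>z. z \<in> set q"] by blast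
  then obtain zs zs' where q: "q = zs @ y # zs'" by (metis split_list)
  define c where "c = (u # xs) @ (y # rev zs)"
  have "distinct c" using assms(1,2) p q xs unfolding c_def by auto
  moreover have "3 \<le> length c"
    using assms(5) p q unfolding c_def by (cases xs; cases zs) auto
  moreover have "walk_edges c \<subseteq> E"
  proof -
    have "walk_edges ((u # xs) @ [y]) \<subseteq> walk_edges (u # p)"
      using walk_edges_take[of "Suc (Suc (length xs))" "u # p"] p by simp
    moreover have "walk_edges (zs @ [y]) \<subseteq> walk_edges (u # q)"
      using walk_edges_drop[of 1 "u # zs @ [y]"] walk_edges_take[of "Suc (Suc (length zs))" "u # q"]
        q by simp
    moreover have "walk_edges c = walk_edges ((u # xs) @ [y]) \<union> walk_edges (rev (zs @ [y]))"
      unfolding c_def walk_edges_append by simp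
    ultimately show ?thesis using assms(7,8) walk_edges_rev by blast
  qed
  moreover have "{last c, hd c} \<in> E"
    using assms(8) q unfolding c_def by (cases zs) (auto simp: insert_commute)
  ultimately show ?thesis unfolding acyclic_graph_iff_walk_edges by blast
qed

lemma acyclic_path_unique:
  assumes "acyclic_graph E" "is_path E p u v" "is_path E q u v"
  shows "p = q"
  using assms(2,3)
proof (induction p arbitrary: u q)
  case Nil
  then show ?case by (simp add: is_path_def)
next
  case (Cons a p)
  obtain q' where q: "q = u # q'" and a: "a = u"
    using Cons.prems by (cases q) (auto simp: is_path_def)
  consider "p = []" | "q' = []" | "p \<noteq> []" "q' \<noteq> []" "hd p = hd q'"
    | "p \<noteq> []" "q' \<noteq> []" "hd p \<noteq> hd q'" by blast
  then show ?case
  proof cases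
    case 1
    then have "v = u" using Cons.prems(1) a by (simp add: is_path_def)
    then have "q' = []" using Cons.prems(2) q by (simp add: is_path_loop)
    then show ?thesis using 1 a q by simp
  next
    case 2
    then have "v = u" using Cons.prems(2) q by (simp add: is_path_def)
    then have "p = []" using Cons.prems(1) a by (simp add: is_path_loop)
    then show ?thesis using 2 a q by simp
  next
    case 3
    have "is_path E p (hd p) v" using Cons.prems(1) a 3 by (simp add: is_path_Cons)
    moreover have "is_path E q' (hd p) v" using Cons.prems(2) q 3 by (simp add: is_path_Cons)
    ultimately show ?thesis using Cons.IH a q by simp
  next
    case 4
    have p: "distinct (u # p)" "last p = v" "walk_edges (u # p) \<subseteq> E"
      using Cons.prems(1) a 4(1) by (simp_all add: is_path_iff_walk_edges)
    have q': "distinct (u # q')" "last q' = v" "walk_edges (u # q') \<subseteq> E"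
      using Cons.prems(2) q 4(2) by (simp_all add: is_path_iff_walk_edges)
    have "\<not> acyclic_graph E"
      by (rule diverging_paths_not_acyclic[of u p q']) (use p q' 4 in simp_all)
    then show ?thesis using assms(1) by contradiction
  qed
qed

lemma path_list_eqI: "acyclic_graph E \<Longrightarrow> is_path E p u v \<Longrightarrow> path_list E u v = p"
  unfolding path_list_def by (rule the_equality) (simp_all add: acyclic_path_unique)

lemma path_list_take:
  "acyclic_graph E \<Longrightarrow> is_path E p u v \<Longrightarrow> i < length p \<Longrightarrow>
     path_list E u (p ! i) = take (Suc i) p"
  by (intro path_list_eqI is_path_take)

lemma path_list_drop:
  "acyclic_graph E \<Longrightarrow> is_path E p u v \<Longrightarrow> i < length p \<Longrightarrow>
     path_list E (p ! i) v = drop i p"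
  by (intro path_list_eqI is_path_drop)

locale rooted_tree =
  fixes T :: "('x, 'v) ptree" and r :: 'v
  assumes tree: "is_tree (verts T) (edges T)" and root: "r \<in> verts T"
begin

abbreviation root_path :: "'v \<Rightarrow> 'v list" where
  "root_path w \<equiv> path_list (edges T) r w"

lemma acyclic_edges: "acyclic_graph (edges T)"
  using tree unfolding is_tree_def by blast

lemma edge_endpoints:
  "e \<in> edges T \<Longrightarrow> \<exists>a b. e = {a, b} \<and> a \<noteq> b \<and> a \<in> verts T \<and> b \<in> verts T"
  using tree unfolding is_tree_def by blast

lemma edge_subset_verts: "e \<in> edges T \<Longrightarrow> e \<subseteq> verts T"
  using edge_endpoints by blast

lemma finite_edges: "finite (edges T)"
proof (rule finite_subset)
  show "edges T \<subseteq> Pow (verts T)" using edge_subset_verts by blast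
  show "finite (Pow (verts T))" using tree unfolding is_tree_def by simp
qed

lemma is_path_path_list:
  "u \<in> verts T \<Longrightarrow> v \<in> verts T \<Longrightarrow> is_path (edges T) (path_list (edges T) u v) u v"
  using tree path_list_eqI[OF acyclic_edges] unfolding is_tree_def by metis

lemma root_path_nth:
  "w \<in> verts T \<Longrightarrow> i < length (root_path w) \<Longrightarrow>
     root_path (root_path w ! i) = take (Suc i) (root_path w)"
  using path_list_take[OF acyclic_edges is_path_path_list[OF root]] .

lemma path_list_root_path_nth:
  "w \<in> verts T \<Longrightarrow> i < length (root_path w) \<Longrightarrow>
     path_list (edges T) (root_path w ! i) w = drop i (root_path w)"
  using path_list_drop[OF acyclic_edges is_path_path_list[OF root]] .

lemma ancestor_antisym:
  assumes "b \<in> verts T" "a \<in> set (root_path b)" "b \<in> set (root_path a)"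
  shows "a = b"
proof -
  let ?p = "root_path b"
  have p: "is_path (edges T) ?p r b" by (rule is_path_path_list[OF root assms(1)])
  obtain i where i: "i < length ?p" "?p ! i = a" using assms(2) by (meson in_set_conv_nth)
  have "root_path a = take (Suc i) ?p" using root_path_nth[OF assms(1) i(1)] unfolding i(2) .
  then obtain j where j: "j \<le> i" "?p ! j = b" using assms(3) in_set_take_Suc_iff[OF i(1)] by auto
  have "?p ! (length ?p - 1) = b" using p unfolding is_path_def by (metis last_conv_nth)
  moreover have "j < length ?p" "length ?p - 1 < length ?p" using i(1) j(1) by linarith+
  moreover have "distinct ?p" using p unfolding is_path_def by blast
  ultimately have "j = length ?p - 1" using j(2) nth_eq_iff_index_eq by metis
  then have "i = j" using i(1) j(1) by linarith
  then show ?thesis using i(2) j(2) by simp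
qed

lemma root_path_edge:
  assumes "{a, b} \<in> edges T" "a \<noteq> b"
  shows "root_path b = root_path a @ [b] \<or> root_path a = root_path b @ [a]"
proof -
  have extend: "root_path b = root_path a @ [b]"
    if "{a, b} \<in> edges T" "b \<notin> set (root_path a)" for a b
  proof -
    have "a \<in> verts T" using edge_subset_verts that(1) by blast
    then have "is_path (edges T) (root_path a @ [b]) r b"
      using is_path_snoc[OF is_path_path_list[OF root] that(2,1)] by blast
    then show ?thesis by (rule path_list_eqI[OF acyclic_edges])
  qed
  have "a \<notin> set (root_path b)" if "b \<in> set (root_path a)"
    using ancestor_antisym[of a b] that assms edge_subset_verts by blast
  then show ?thesis using extend[of a b] extend[of b a] assms(1) by (metis insert_commute)
qed

lemma lower_end_eqI:
  assumes "u \<in> verts T" "v \<in> verts T" "root_path v = root_path u @ [v]"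
  shows "lower_end T r {u, v} = v"
proof -
  have "distinct (root_path u @ [v])"
    using is_path_path_list[OF root assms(2)] assms(3) by (simp add: is_path_def)
  moreover have "u \<in> set (root_path u)"
    using is_path_path_list[OF root assms(1)] by (metis is_path_def last_in_set)
  ultimately have "v \<notin> set (root_path u)" "u \<noteq> v" by auto
  then show ?thesis
    unfolding lower_end_def path_verts_def using assms(3) \<open>u \<in> set (root_path u)\<close>
    by (intro the_equality) auto
qed

lemma lower_end_edge:
  assumes "e \<in> edges T"
  obtains u where "u \<in> verts T" "lower_end T r e \<in> verts T" "e = {u, lower_end T r e}"
    "root_path (lower_end T r e) = root_path u @ [lower_end T r e]"
proof -
  obtain a b where ab: "e = {a, b}" "a \<noteq> b" "a \<in> verts T" "b \<in> verts T"
    using edge_endpoints[OF assms] by blast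
  consider "root_path b = root_path a @ [b]" | "root_path a = root_path b @ [a]"
    using root_path_edge assms ab by blast
  then show ?thesis
  proof cases
    case 1
    then show ?thesis using that[of a] lower_end_eqI[of a b] ab by simp
  next
    case 2
    then show ?thesis using that[of b] lower_end_eqI[of b a] ab by (simp add: insert_commute)
  qed
qed

lemma path_edges_mono_descendant:
  assumes "w \<in> verts T" "b \<in> set (root_path w)" "a \<in> set (root_path b)"
  shows "path_edges (edges T) a b \<subseteq> path_edges (edges T) a w"
proof -
  let ?p = "root_path w"
  have p: "is_path (edges T) ?p r w" by (rule is_path_path_list[OF root assms(1)])
  obtain j where j: "j < length ?p" "?p ! j = b" using assms(2) by (meson in_set_conv_nth)
  have "root_path b = take (Suc j) ?p" using root_path_nth[OF assms(1) j(1)] j(2) by simp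
  then obtain i where i: "i \<le> j" "?p ! i = a" using assms(3) j(1) in_set_take_Suc_iff by metis
  have "path_list (edges T) a b = drop i (take (Suc j) ?p)"
    using path_list_drop[OF acyclic_edges is_path_take[OF p j(1)], of i] i j by simp
  also have "\<dots> = take (Suc j - i) (drop i ?p)" by (rule drop_take)
  finally have "path_edges (edges T) a b \<subseteq> walk_edges (drop i ?p)"
    unfolding path_edges_eq_walk_edges using walk_edges_take by metis
  also have "drop i ?p = path_list (edges T) a w"
    using path_list_root_path_nth[OF assms(1), of i] i j(1) by simp
  finally show ?thesis unfolding path_edges_eq_walk_edges .
qed

lemma edge_on_path_to_descendant:
  assumes "w \<in> verts T" "u \<in> verts T" "root_path v = root_path u @ [v]"
    and "v \<in> set (root_path w)" "a \<in> set (root_path w)" "v \<notin> set (root_path a)"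
  shows "{u, v} \<in> path_edges (edges T) a w"
proof -
  let ?p = "root_path w"
  obtain i where i: "i < length ?p" "?p ! i = v" using assms(4) by (meson in_set_conv_nth)
  obtain k where k: "k < length ?p" "?p ! k = a" using assms(5) by (meson in_set_conv_nth)
  have "k < i"
  proof (rule ccontr)
    assume "\<not> k < i"
    then have "v \<in> set (take (Suc k) ?p)"
      using in_set_take_Suc_iff[OF k(1)] i(2) by (metis not_less)
    moreover have "root_path a = take (Suc k) ?p"
      using root_path_nth[OF assms(1) k(1)] unfolding k(2) .
    ultimately show False using assms(6) by simp
  qed
  have "root_path v = take i ?p @ [v]"
    using root_path_nth[OF assms(1) i(1)] take_Suc_conv_app_nth[OF i(1)] unfolding i(2) by simp
  then have "root_path u = take i ?p" using assms(3) by simp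
  moreover have "last (root_path u) = u"
    using is_path_path_list[OF root assms(2)] unfolding is_path_def by blast
  moreover have "take i ?p = take (i - 1) ?p @ [?p ! (i - 1)]"
    using take_Suc_conv_app_nth[of "i - 1" ?p] \<open>k < i\<close> i(1) by simp
  ultimately have u: "?p ! (i - 1) = u" by simp
  have "{?p ! (i - 1), ?p ! i} \<in> walk_edges (drop k ?p)"
  proof -
    have "i - 1 - k < length (drop k ?p) - 1" using \<open>k < i\<close> i(1) by simp
    moreover have "drop k ?p ! (i - 1 - k) = ?p ! (i - 1)" "drop k ?p ! Suc (i - 1 - k) = ?p ! i"
      using \<open>k < i\<close> i(1) by (simp_all add: Suc_diff_Suc)
    ultimately show ?thesis
      unfolding walk_edges_conv_nth by (intro image_eqI[where x = "i - 1 - k"]) simp_all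
  qed
  moreover have "drop k ?p = path_list (edges T) a w"
    using path_list_root_path_nth[OF assms(1) k(1)] unfolding k(2) by simp
  ultimately show ?thesis using u i(2) unfolding path_edges_eq_walk_edges by simp
qed

lemma Dset_antimono: "E1 \<subseteq> E \<Longrightarrow> Dset T r E e \<subseteq> Dset T r E1 e"
  unfolding Dset_def by blast

lemma Dset_subset_edges: "Dset T r E e \<subseteq> edges T"
  unfolding Dset_def by blast

lemma finite_Dset: "finite (Dset T r E e)"
  using finite_subset[OF Dset_subset_edges finite_edges] .

lemma wt_antimono:
  assumes "\<forall>f\<in>edges T. 0 \<le> x f" "E1 \<subseteq> E"
  shows "wt T r x E e \<le> wt T r x E1 e"
  unfolding wt_def
proof (rule sum_mono2[OF finite_Dset Dset_antimono[OF assms(2)]])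
  fix f assume "f \<in> Dset T r E1 e - Dset T r E e"
  then show "0 \<le> x f" using assms(1) Dset_subset_edges by blast
qed

lemma Dset_mem_between:
  assumes "f \<in> Dset T r E e" "g \<in> edges T"
    and "lower_end T r e \<in> set (root_path (lower_end T r g))"
    and "lower_end T r g \<in> set (root_path (lower_end T r f))"
  shows "g \<in> Dset T r E e"
proof -
  have "lower_end T r f \<in> verts T"
    using assms(1) Dset_subset_edges lower_end_edge by blast
  then show ?thesis
    using assms path_edges_mono_descendant unfolding Dset_def path_verts_def by blast
qed

definition selectable :: "('v set \<Rightarrow> real) \<Rightarrow> 'v set set \<Rightarrow> 'v set \<Rightarrow> bool" where
  "selectable x E e \<longleftrightarrow> 1/4 \<le> wt T r x E e \<and> (\<forall>f \<in> Dset T r E e - {e}. wt T r x E f < 1/4)"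

lemma Dset_selected_disjoint:
  assumes x: "\<forall>f\<in>edges T. 0 \<le> x f"
    and E1: "E1 \<subseteq> E" and e: "e \<in> E" "e \<in> edges T" "selectable x E1 e"
    and e': "e' \<in> edges T" "e' \<notin> E" "1/4 \<le> wt T r x E e'"
  shows "Dset T r E1 e \<inter> Dset T r E e' = {}"
proof (rule ccontr)
  assume "Dset T r E1 e \<inter> Dset T r E e' \<noteq> {}"
  then obtain f where f: "f \<in> Dset T r E1 e" "f \<in> Dset T r E e'" by blast
  define v v' w where "v = lower_end T r e" and "v' = lower_end T r e'" and "w = lower_end T r f"
  have "w \<in> verts T" unfolding w_def using f(1) Dset_subset_edges lower_end_edge by blast
  have "v \<in> set (root_path w)" "v' \<in> set (root_path w)"
    using f unfolding Dset_def v_def v'_def w_def path_verts_def by blast+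
  show False
  proof (cases "v \<in> set (root_path v')")
    case True
    then have "e' \<in> Dset T r E1 e"
      using Dset_mem_between[OF f(1) e'(1)] \<open>v' \<in> set (root_path w)\<close>
      unfolding v_def v'_def w_def by blast
    moreover have "e' \<noteq> e" using e(1) e'(2) by blast
    ultimately have "wt T r x E1 e' < 1/4" using e(3) unfolding selectable_def by blast
    moreover have "wt T r x E e' \<le> wt T r x E1 e'" by (rule wt_antimono[OF x E1])
    ultimately show False using e'(3) by linarith
  next
    case False
    obtain u where u: "u \<in> verts T" "e = {u, v}" "root_path v = root_path u @ [v]"
      using lower_end_edge[OF e(2)] unfolding v_def by metis
    have "e \<in> path_edges (edges T) v' w"
      using edge_on_path_to_descendant[OF \<open>w \<in> verts T\<close> u(1,3)] u(2) False
        \<open>v \<in> set (root_path w)\<close> \<open>v' \<in> set (root_path w)\<close> by blast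
    then show False using f(2) e(1) unfolding Dset_def v'_def w_def by blast
  qed
qed

text \<open>B e is the set of edges selected before e.\<close>
lemma rounding_reach_charging:
  assumes x: "\<forall>f\<in>edges T. 0 \<le> x f" and "rounding_reach T r x E"
  shows "E \<subseteq> edges T \<and> (\<exists>B. (\<forall>e\<in>E. B e \<subseteq> E \<and> selectable x (B e) e) \<and>
           disjoint_family_on (\<lambda>e. Dset T r (B e) e) E)"
  using assms(2)
proof (induction rule: rounding_reach.induct)
  case start
  then show ?case by (simp add: disjoint_family_on_def)
next
  case (step E e)
  then obtain B where E: "E \<subseteq> edges T" and B: "\<forall>e\<in>E. B e \<subseteq> E \<and> selectable x (B e) e"
    and disj: "disjoint_family_on (\<lambda>e. Dset T r (B e) e) E" by blast
  define B' where "B' = B(e := E)"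
  have "\<forall>e'\<in>insert e E. B' e' \<subseteq> insert e E \<and> selectable x (B' e') e'"
    using B step.hyps unfolding B'_def selectable_def by auto
  moreover have "disjoint_family_on (\<lambda>e'. Dset T r (B' e') e') (insert e E)"
  proof -
    have B': "B' e = E" "\<And>e0. e0 \<in> E \<Longrightarrow> B' e0 = B e0"
      using step.hyps(3) unfolding B'_def by auto
    have "Dset T r (B e0) e0 \<inter> Dset T r E e = {}" if "e0 \<in> E" for e0
    proof (rule Dset_selected_disjoint[OF x])
      show "B e0 \<subseteq> E" "selectable x (B e0) e0" using B that by auto
      show "e0 \<in> E" "e0 \<in> edges T" using E that by auto
    qed (use step.hyps in auto)
    then have "Dset T r (B' e) e \<inter> (\<Union>e0\<in>E. Dset T r (B' e0) e0) = {}"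
      using B' by auto
    moreover have "disjoint_family_on (\<lambda>e'. Dset T r (B' e') e') E"
      using disj B' unfolding disjoint_family_on_def by auto
    ultimately show ?thesis using step.hyps(3) by (simp add: disjoint_family_on_insert)
  qed
  ultimately show ?case using E step.hyps(2) by blast
qed

lemma rounding_reach_card_le:
  assumes x: "\<forall>f\<in>edges T. 0 \<le> x f" and "rounding_reach T r x E"
  shows "real (card E) \<le> 4 * (\<Sum>f\<in>edges T. x f)"
proof -
  obtain B where E: "E \<subseteq> edges T" and B: "\<forall>e\<in>E. selectable x (B e) e"
    and disj: "disjoint_family_on (\<lambda>e. Dset T r (B e) e) E"
    using rounding_reach_charging[OF assms] by blast
  have "finite E" using E finite_edges finite_subset by blast
  have "real (card E) / 4 = (\<Sum>e\<in>E. 1/4)" by simp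
  also have "\<dots> \<le> (\<Sum>e\<in>E. wt T r x (B e) e)"
    using B unfolding selectable_def by (intro sum_mono) blast
  also have "\<dots> = (\<Sum>f\<in>(\<Union>e\<in>E. Dset T r (B e) e). x f)"
    unfolding wt_def using \<open>finite E\<close> disj finite_Dset
    by (intro sum.UNION_disjoint_family[symmetric]) auto
  also have "\<dots> \<le> (\<Sum>f\<in>edges T. x f)"
    using x Dset_subset_edges by (intro sum_mono2[OF finite_edges]) auto
  finally show ?thesis by simp
qed

end

theorem lemma4:
  fixes X :: "'x set" and T :: "nat \<Rightarrow> ('x, 'v) ptree" and t :: nat
    and x :: "'v set \<Rightarrow> real" and \<rho> :: 'x and E :: "'v set set"
  assumes t1: "1 \<le> t"
    and trees: "\<forall>i\<in>{1..t}. phylo_tree X (T i)"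
    and Qs: "Qs = {Q \<in> quartets X. \<exists>i\<in>{2..t}. incompatible_quartet (T 1) (T i) Q}"
    and opt: "lp_optimal (T 1) Qs x"
    and root: "\<rho> \<in> X"
    and final: "rounding_final (T 1) (lab (T 1) \<rho>) x E"
  shows "real (card E) \<le> 4 * (\<Sum>e\<in>edges (T 1). x e)"
proof -
  have "phylo_tree X (T 1)" using trees t1 by simp
  then interpret rooted_tree "T 1" "lab (T 1) \<rho>"
    using root unfolding phylo_tree_def by unfold_locales blast+
  have "\<forall>e\<in>edges (T 1). 0 \<le> x e" using opt unfolding lp_optimal_def lp_feasible_def by blast
  moreover have "rounding_reach (T 1) (lab (T 1) \<rho>) x E"
    using final unfolding rounding_final_def by blast
  ultimately show ?thesis by (rule rounding_reach_card_le)
qed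

end
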